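(* Given any $\lambda\in(0,1)$, $\epsilon_p\in(0,1)$, $H>0$ and any constants $c_1,c_2\ge4$, there exists a set of MDPs $\mathcal M=\{m_1,m_2\}$ with horizon $H$ that is $\lambda$-separable but is not well-separated.
   Context: MDPs are tabular with common state and action spaces; $P_i(s,a)=P_i(\cdot\mid s,a)$. $\mathcal M$ is $\lambda$-separable if for every $i\ne j$ there exists $(s,a)$ with $\|P_i(s,a)-P_j(s,a)\|_1\ge\lambda$. Well-separated (entropy-based separation): let $\Pi$ be the class of all history-dependent, possibly non-Markovian policies, and for $\pi\in\Pi$ let $\tau\sim(m,\pi)$ be a length-$H$ trajectory sampled from MDP $m$ under $\pi$, with $\Pr_{m,\pi}(\tau)$ its probability. $\mathcal M$ (with $M=|\mathcal M|$) is well-separated (with parameters $\epsilon_p,c_1,c_2$) if for all $m,m'\in\mathcal M$ with $m'\ne m$ and all $\pi\in\Pi$, \[ \Pr_{\tau\sim(m,\pi)}\Big(\frac{\Pr_{m',\pi}(\tau)}{\Pr_{m,\pi}(\tau)}>(\epsilon_p/M)^{c_1}\Big)<(\epsilon_p/M)^{c_2}. \] *)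

theory Defs
  imports "HOL-Probability.Probability"
begin

text \<open>An MDP is given by its
transition kernel; all MDPs in a family share the initial-state distribution.\<close>

type_synonym mdp = "nat \<Rightarrow> nat \<Rightarrow> nat pmf"

text \<open>History-dependent (non-Markovian), possibly randomized policy:
given the past state-action pairs and the current state, a distribution over actions.\<close>
type_synonym policy = "(nat \<times> nat) list \<Rightarrow> nat \<Rightarrow> nat pmf"

definition valid_mdp :: "nat set \<Rightarrow> nat set \<Rightarrow> mdp \<Rightarrow> bool" where
  "valid_mdp S A P \<longleftrightarrow> (\<forall>s\<in>S. \<forall>a\<in>A. set_pmf (P s a) \<subseteq> S)"

definition valid_policy :: "nat set \<Rightarrow> policy \<Rightarrow> bool" where
  "valid_policy A \<pi> \<longleftrightarrow> (\<forall>h s. set_pmf (\<pi> h s) \<subseteq> A)"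

definition trajs :: "nat set \<Rightarrow> nat set \<Rightarrow> nat \<Rightarrow> (nat \<times> nat) list set" where
  "trajs S A H = {\<tau>. length \<tau> = H \<and> set \<tau> \<subseteq> S \<times> A}"

fun tp_aux :: "mdp \<Rightarrow> policy \<Rightarrow> (nat \<times> nat) list \<Rightarrow> (nat \<times> nat) list \<Rightarrow> real" where
  "tp_aux P \<pi> h [] = 1"
| "tp_aux P \<pi> h ((s,a) # rest) =
     pmf (\<pi> h s) a
     * (case rest of [] \<Rightarrow> 1 | (s',_) # _ \<Rightarrow> pmf (P s a) s')
     * tp_aux P \<pi> (h @ [(s,a)]) rest"

fun traj_prob :: "nat pmf \<Rightarrow> mdp \<Rightarrow> policy \<Rightarrow> (nat \<times> nat) list \<Rightarrow> real" where
  "traj_prob \<nu> P \<pi> [] = 1"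
| "traj_prob \<nu> P \<pi> ((s,a) # rest) = pmf \<nu> s * tp_aux P \<pi> [] ((s,a) # rest)"

definition l1_dist :: "nat set \<Rightarrow> nat pmf \<Rightarrow> nat pmf \<Rightarrow> real" where
  "l1_dist S p q = (\<Sum>s\<in>S. \<bar>pmf p s - pmf q s\<bar>)"

definition lambda_separable :: "nat set \<Rightarrow> nat set \<Rightarrow> mdp set \<Rightarrow> real \<Rightarrow> bool" where
  "lambda_separable S A Ms lam \<longleftrightarrow>
     (\<forall>Pi\<in>Ms. \<forall>Pj\<in>Ms. Pi \<noteq> Pj \<longrightarrow> (\<exists>s\<in>S. \<exists>a\<in>A. l1_dist S (Pi s a) (Pj s a) \<ge> lam))"

definition ratio_event_prob ::
  "nat set \<Rightarrow> nat set \<Rightarrow> nat \<Rightarrow> nat pmf \<Rightarrow> mdp \<Rightarrow> mdp \<Rightarrow> policy \<Rightarrow> real \<Rightarrow> real" where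
  "ratio_event_prob S A H \<nu> m m' \<pi> thr =
     (\<Sum>\<tau>\<in>{\<tau>\<in>trajs S A H. traj_prob \<nu> m \<pi> \<tau> > 0 \<and>
                 traj_prob \<nu> m' \<pi> \<tau> / traj_prob \<nu> m \<pi> \<tau> > thr}.
        traj_prob \<nu> m \<pi> \<tau>)"

definition well_separated ::
  "nat set \<Rightarrow> nat set \<Rightarrow> nat \<Rightarrow> nat pmf \<Rightarrow> mdp set \<Rightarrow> real \<Rightarrow> real \<Rightarrow> real \<Rightarrow> bool" where
  "well_separated S A H \<nu> Ms \<epsilon>p c1 c2 \<longleftrightarrow>
     (\<forall>m\<in>Ms. \<forall>m'\<in>Ms. m' \<noteq> m \<longrightarrow> (\<forall>\<pi>. valid_policy A \<pi> \<longrightarrow>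
        ratio_event_prob S A H \<nu> m m' \<pi> ((\<epsilon>p / real (card Ms)) powr c1)
          < (\<epsilon>p / real (card Ms)) powr c2))"

end

theory Submission
  imports Defs
begin

text \<open>Separability only asks that the two kernels differ at \<^emph>\<open>some\<close> state-action pair,
while well-separation quantifies over all policies.  Take two MDPs on states and actions
\<open>{0,1}\<close> that agree on action 0 (both stay in state 0) but differ on action 1 (one moves to
state 0, the other to state 1), so their kernels are at \<open>\<ell>\<^sub>1\<close>-distance 2 at \<open>(0,1)\<close>.  The policy
that always plays action 0 produces, under both MDPs, the trajectory \<open>(0,0),\<dots>,(0,0)\<close> with
probability 1.  Its likelihood ratio is 1, above the threshold \<open>(\<epsilon>\<^sub>p/2)\<^sup>c\<^sup>1 < 1\<close>, so the bad
event has probability \<open>1 \<ge> (\<epsilon>\<^sub>p/2)\<^sup>c\<^sup>2\<close>.\<close>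

lemma l1_dist_commute: "l1_dist S p q = l1_dist S q p"
  unfolding l1_dist_def by (simp add: abs_minus_commute)

lemma lambda_separable_pair:
  assumes "s \<in> S" "a \<in> A" "lam \<le> l1_dist S (P s a) (Q s a)"
  shows "lambda_separable S A {P, Q} lam"
  using assms l1_dist_commute unfolding lambda_separable_def by fastforce

lemma finite_trajs:
  assumes "finite S" "finite A"
  shows "finite (trajs S A H)"
proof -
  have "trajs S A H = {xs. set xs \<subseteq> S \<times> A \<and> length xs = H}"
    unfolding trajs_def by auto
  then show ?thesis
    using finite_lists_length_eq[of "S \<times> A" H] assms by simp
qed

lemma tp_aux_replicate_stay:
  assumes "P s a = return_pmf s"
  shows "tp_aux P (\<lambda>_ _. return_pmf a) h (replicate n (s, a)) = 1"
proof (induction n arbitrary: h)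
  case 0
  then show ?case by simp
next
  case (Suc n)
  have "(case replicate n (s, a) of [] \<Rightarrow> 1 | (s', _) # _ \<Rightarrow> pmf (P s a) s') = (1::real)"
    using assms by (cases n) auto
  then show ?case using Suc by simp
qed

lemma traj_prob_replicate_stay:
  assumes "P s a = return_pmf s"
  shows "traj_prob (return_pmf s) P (\<lambda>_ _. return_pmf a) (replicate n (s, a)) = 1"
proof (cases n)
  case (Suc k)
  then show ?thesis
    using tp_aux_replicate_stay[of P s a "[]" n, OF assms] by simp
qed simp

lemma ratio_event_prob_ge_traj_prob:
  assumes "finite S" "finite A" "\<tau> \<in> trajs S A H"
    and "traj_prob \<nu> m \<pi> \<tau> > 0"
    and "traj_prob \<nu> m' \<pi> \<tau> / traj_prob \<nu> m \<pi> \<tau> > thr"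
  shows "traj_prob \<nu> m \<pi> \<tau> \<le> ratio_event_prob S A H \<nu> m m' \<pi> thr"
  unfolding ratio_event_prob_def
  using assms finite_trajs[OF assms(1,2)]
  by (intro member_le_sum) (auto intro: less_imp_le)

theorem lemma6:
  fixes lam \<epsilon>p c1 c2 :: real and H :: nat
  assumes "0 < lam" "lam < 1" "0 < \<epsilon>p" "\<epsilon>p < 1" "H > 0" "c1 \<ge> 4" "c2 \<ge> 4"
  shows "\<exists>(S::nat set) (A::nat set) (\<nu>::nat pmf) (m1::mdp) (m2::mdp).
           finite S \<and> S \<noteq> {} \<and> finite A \<and> A \<noteq> {} \<and> set_pmf \<nu> \<subseteq> S \<and>
           valid_mdp S A m1 \<and> valid_mdp S A m2 \<and> m1 \<noteq> m2 \<and>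
           lambda_separable S A {m1, m2} lam \<and>
           \<not> well_separated S A H \<nu> {m1, m2} \<epsilon>p c1 c2"
proof -
  define S :: "nat set" where "S = {0, 1}"
  define m1 :: mdp where "m1 = (\<lambda>_ _. return_pmf 0)"
  define m2 :: mdp where "m2 = (\<lambda>_ a. return_pmf a)"
  define \<pi> :: policy where "\<pi> = (\<lambda>_ _. return_pmf 0)"
  define \<tau> where "\<tau> = replicate H (0::nat, 0::nat)"
  have distinct: "m1 \<noteq> m2"
    unfolding m1_def m2_def by (metis return_pmf_inj zero_neq_one)
  have valid: "valid_mdp S S m1" "valid_mdp S S m2" "valid_policy S \<pi>"
    unfolding valid_mdp_def valid_policy_def S_def m1_def m2_def \<pi>_def by auto
  have "lambda_separable S S {m1, m2} lam"
    using assms(2) by (intro lambda_separable_pair[of 0 _ 1])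
      (simp_all add: S_def m1_def m2_def l1_dist_def)
  moreover have "\<not> well_separated S S H (return_pmf 0) {m1, m2} \<epsilon>p c1 c2"
  proof -
    have prob: "traj_prob (return_pmf 0) m \<pi> \<tau> = 1" if "m \<in> {m1, m2}" for m
      using that traj_prob_replicate_stay unfolding \<tau>_def \<pi>_def m1_def m2_def by auto
    have "(\<epsilon>p / 2) powr c1 < 1 powr c1"
      using assms by (intro powr_less_mono2) auto
    then have "traj_prob (return_pmf 0) m1 \<pi> \<tau>
        \<le> ratio_event_prob S S H (return_pmf 0) m1 m2 \<pi> ((\<epsilon>p / 2) powr c1)"
      using prob by (intro ratio_event_prob_ge_traj_prob) (auto simp: S_def \<tau>_def trajs_def)
    moreover have "(\<epsilon>p / 2) powr c2 \<le> 1"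
      using assms by (intro powr_le1) auto
    ultimately show ?thesis
      using prob distinct valid(3) unfolding well_separated_def by fastforce
  qed
  ultimately show ?thesis
    using distinct valid(1,2)
    by (intro exI[of _ S] exI[of _ S] exI[of _ "return_pmf 0"]) (auto simp: S_def)
qed

end
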